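(* Let $\mathcal{D}$ be a hybrid basic action theory containing the action $\mathit{noOp}$, let $\varphi$ be an effect and $\sigma$ a situation. Then: (1) $\mathcal{D}\models\exists a,ts.\,\mathit{PrimCause}(a,ts,\varphi,\sigma)\supset\exists\sigma'.\,\mathit{DefusedSit}(\varphi,\sigma,\sigma')$; (2) $\mathcal{D}\models\forall a_1,ts_1,\sigma_1,a_2,ts_2,\sigma_2.\;\mathit{PreempContr}(a_1,ts_1,\sigma_1,\varphi,\sigma)\land\mathit{PreempContr}(a_2,ts_2,\sigma_2,\varphi,\sigma)\land|\sigma_1|=|\sigma_2|\supset\sigma_1=\sigma_2$; (3) $\mathcal{D}\models\forall\sigma',\sigma''.\;\mathit{DefusedSit}(\varphi,\sigma,\sigma')\land\mathit{DefusedSit}(\varphi,\sigma,\sigma'')\supset\sigma'=\sigma''$; (4) $\mathcal{D}\models\forall\sigma'.\;\mathit{DefusedSit}(\varphi,\sigma,\sigma')\supset\neg\exists b,ts_b.\,\mathit{PrimCause}(b,ts_b,\varphi,\sigma')$.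
   Context: Hybrid temporal situation calculus (HTSC): $S_0$ initial situation, $do(a,s)$ successor situation. $s\sqsubset s'$: $s'$ reachable from $s$ by one or more actions; $s\sqsubseteq s'$: $s\sqsubset s'\lor s=s'$. $\mathit{time}(a(\vec x,t))=t$, $\mathit{start}(do(a,s))=\mathit{time}(a)$. $\mathit{Exec}(s)\doteq\forall a,s'.(do(a,s')\sqsubseteq s\supset\mathit{Poss}(a,s')\land\mathit{start}(s')\le\mathit{time}(a))$; $s<s'$ abbreviates $s\sqsubset s'\land\mathit{Exec}(s')$; $s\le s'$ abbreviates $s<s'\lor s=s'$. $\mathit{timeStamp}(S_0)=0$, $\mathit{timeStamp}(do(a,s))=\mathit{timeStamp}(s)+1$. A hybrid basic action theory $\mathcal{D}$ contains initial-state, precondition, successor-state (discrete fluents), state evolution (temporal fluents), unique-names and foundational axioms. A temporal fluent $f$ has state evolution axiom $f(\vec x,t,s)=y\equiv[\bigvee_i(\gamma^f_i(\vec x,s)\land\delta_i(\vec x,y,t,s))\lor(y=f(\vec x,\mathit{start}(s),s)\land\neg\bigvee_i\gamma^f_i(\vec x,s))]$ with mutually exclusive contexts $\gamma^f_i$. An effect $\varphi$ is a situation- and time-suppressed formula, uniform in the situation, constraining the value of one primitive temporal fluent $f$; $\varphi[t,s]$ restores time $t$ and situation $s$; $\psi[s]$ restores $s$ in situation-suppressed $\psi$. $\mathit{noOp}(t)$ is an action (with $\mathit{time}(\mathit{noOp}(t))=t$) that is always possible and affects no fluent. $\mathit{CausesDir}(a,ts,\psi,s)\doteq\exists s_a.\,\mathit{timeStamp}(s_a)=ts\land(S_0<do(a,s_a)\le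 s)\land\neg\psi[s_a]\land\forall s'.(do(a,s_a)\le s'\le s\supset\psi[s'])$. $\mathit{end}(s',s)=\mathit{start}(s')$ if $s'=s$; $=\mathit{time}(a)$ if $do(a,s')\le s$. $\mathit{AchvSitAux}(s_\varphi,\varphi,s)\doteq\varphi[\mathit{end}(s_\varphi,s),s_\varphi]\land\forall s',t.(s_\varphi<s'\le s\land\mathit{start}(s')\le t\le\mathit{end}(s',s)\supset\varphi[t,s'])$; $\mathit{AchvSit}(s_\varphi,\varphi,s)\doteq\mathit{AchvSitAux}(s_\varphi,\varphi,s)\land\neg\exists s''.(s''<s_\varphi\land\mathit{AchvSitAux}(s'',\varphi,s))$. $\mathit{DirPossContr}(\alpha,s_\alpha,s_\varphi,\sigma,\varphi)\doteq\exists i,ts.\,\mathit{Exec}(s_\alpha)\land\mathit{Poss}(\alpha,s_\alpha)\land\mathit{timeStamp}(s_\alpha)=ts\land s_\alpha<s_\varphi\le\sigma\land\neg\varphi[\mathit{time}(\alpha),s_\alpha]\land\varphi[\mathit{end}(s_\varphi,\sigma),s_\varphi]\land\mathit{CausesDir}(\alpha,ts,\gamma^f_i,s_\varphi)$; $\mathit{DirActContr}(\alpha,s_\alpha,s_\varphi,\varphi,\sigma)\doteq\exists\sigma'.\,\mathit{DirPossContr}(\alpha,s_\alpha,s_\varphi,\sigma',\varphi)\land\sigma'\le\sigma$; $\mathit{PrimCause}(\alpha,ts,\varphi,\sigma)\doteq\exists s_\alpha,s_\varphi.\,\mathit{AchvSit}(s_\varphi,\varphi,\sigma)\land\mathit{timeStamp}(s_\alpha)=ts\land\mathit{DirActContr}(\alpha,s_\alpha,s_\varphi,\varphi,\sigma)$.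 Single-action counterfactual: $\mathit{CF}_{one}(s',s,\langle a',a,ts\rangle)$ holds iff there is $s_{sh}$ with $\mathit{timeStamp}(s_{sh})=ts$, $a\ne a'$, $do(a,s_{sh})\sqsubseteq s$, $do(a',s_{sh})\sqsubseteq s'$, and: for all $a^*,s^*$ with $do(a,s_{sh})\sqsubset do(a^*,s^* )\sqsubseteq s$ there is $s^+$ with $\mathit{timeStamp}(s^+)=\mathit{timeStamp}(s^* )$ and $do(a^*,s^+)\sqsubseteq s'$; and for all $a^*,s^*$ with $do(a',s_{sh})\sqsubset do(a^*,s^* )\sqsubseteq s'$ there is $s^+$ with $\mathit{timeStamp}(s^+)=\mathit{timeStamp}(s^* )$ and $do(a^*,s^+)\sqsubseteq s$. Preempted contributors: $\mathit{PreempContr}$ is the least relation $P(a,ts,\sigma',\varphi,\sigma)$ such that (i) if $\mathit{PrimCause}(a,ts,\varphi,\sigma)$ and $\mathit{CF}_{one}(\sigma',\sigma,\langle\mathit{noOp}(\mathit{time}(a)),a,ts\rangle)$ then $P(a,ts,\sigma',\varphi,\sigma)$; (ii) if $P(a'',ts'',\sigma'',\varphi,\sigma)$, $\mathit{PrimCause}(a',ts',\varphi,\sigma'')$ and $\mathit{CF}_{one}(\sigma',\sigma'',\langle\mathit{noOp}(\mathit{time}(a')),a',ts'\rangle)$ then $P(a',ts',\sigma',\varphi,\sigma)$. $|s|$ is the number of $\mathit{noOp}$ actions in $s$: $|S_0|=0$; $|do(a,s')|=|s'|$ if $a$ is not of the form $\mathit{noOp}(t)$; $|do(\mathit{noOp}(t),s')|=1+|s'|$.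 $\mathit{DefusedSit}(\varphi,\sigma,\sigma')\doteq\exists a',ts'.\,\mathit{PreempContr}(a',ts',\sigma',\varphi,\sigma)\land\forall\sigma'',a'',ts''.\,(\mathit{PreempContr}(a'',ts'',\sigma'',\varphi,\sigma)\land\sigma'\ne\sigma''\supset|\sigma''|<|\sigma'|)$. *)

theory Defs
  imports Complex_Main
begin

datatype 'a sit = S0 | Do 'a "'a sit"

fun psub :: "'a sit \<Rightarrow> 'a sit \<Rightarrow> bool" where
  "psub s S0 = False"
| "psub s (Do a s') = (s = s' \<or> psub s s')"

definition subeq :: "'a sit \<Rightarrow> 'a sit \<Rightarrow> bool" where
  "subeq s s' \<longleftrightarrow> psub s s' \<or> s = s'"

fun timeStamp :: "'a sit \<Rightarrow> nat" where
  "timeStamp S0 = 0"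
| "timeStamp (Do a s) = timeStamp s + 1"

record 'a htsc =
  time :: "'a \<Rightarrow> real"
  Poss :: "'a \<Rightarrow> 'a sit \<Rightarrow> bool"
  start0 :: real
  noOp :: "real \<Rightarrow> 'a"

fun start :: "'a htsc \<Rightarrow> 'a sit \<Rightarrow> real" where
  "start M S0 = start0 M"
| "start M (Do a s) = time M a"

definition Exec :: "'a htsc \<Rightarrow> 'a sit \<Rightarrow> bool" where
  "Exec M s \<longleftrightarrow> (\<forall>a s'. subeq (Do a s') s \<longrightarrow> Poss M a s' \<and> start M s' \<le> time M a)"

definition slt :: "'a htsc \<Rightarrow> 'a sit \<Rightarrow> 'a sit \<Rightarrow> bool" where
  "slt M s s' \<longleftrightarrow> psub s s' \<and> Exec M s'"

definition sle :: "'a htsc \<Rightarrow> 'a sit \<Rightarrow> 'a sit \<Rightarrow> bool" where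
  "sle M s s' \<longleftrightarrow> slt M s s' \<or> s = s'"

text \<open>Situation-suppressed formulas are represented by predicates on situations;
  effects (with time restored) by predicates on time and situation.\<close>

definition CausesDir :: "'a htsc \<Rightarrow> 'a \<Rightarrow> nat \<Rightarrow> ('a sit \<Rightarrow> bool) \<Rightarrow> 'a sit \<Rightarrow> bool" where
  "CausesDir M a ts \<psi> s \<longleftrightarrow>
     (\<exists>sa. timeStamp sa = ts \<and> slt M S0 (Do a sa) \<and> sle M (Do a sa) s \<and> \<not> \<psi> sa \<and>
           (\<forall>s'. sle M (Do a sa) s' \<and> sle M s' s \<longrightarrow> \<psi> s'))"

text \<open>end(s',s): start(s') if s' = s, time(a) if do(a,s') \<le> s (unspecified otherwise).\<close>
definition send :: "'a htsc \<Rightarrow> 'a sit \<Rightarrow> 'a sit \<Rightarrow> real" where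
  "send M s' s = (if s' = s then start M s' else time M (THE a. sle M (Do a s') s))"

definition AchvSitAux :: "'a htsc \<Rightarrow> 'a sit \<Rightarrow> (real \<Rightarrow> 'a sit \<Rightarrow> bool) \<Rightarrow> 'a sit \<Rightarrow> bool" where
  "AchvSitAux M s\<phi> \<phi> s \<longleftrightarrow>
     \<phi> (send M s\<phi> s) s\<phi> \<and>
     (\<forall>s' t. slt M s\<phi> s' \<and> sle M s' s \<and> start M s' \<le> t \<and> t \<le> send M s' s \<longrightarrow> \<phi> t s')"

definition AchvSit :: "'a htsc \<Rightarrow> 'a sit \<Rightarrow> (real \<Rightarrow> 'a sit \<Rightarrow> bool) \<Rightarrow> 'a sit \<Rightarrow> bool" where
  "AchvSit M s\<phi> \<phi> s \<longleftrightarrow>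
     AchvSitAux M s\<phi> \<phi> s \<and> \<not> (\<exists>s''. slt M s'' s\<phi> \<and> AchvSitAux M s'' \<phi> s)"

text \<open>\<gamma> i is the i-th context of the state evolution axiom of the temporal fluent f
  constrained by the effect \<phi>.\<close>
definition DirPossContr :: "'a htsc \<Rightarrow> ('i \<Rightarrow> 'a sit \<Rightarrow> bool) \<Rightarrow> 'a \<Rightarrow> 'a sit \<Rightarrow> 'a sit
     \<Rightarrow> 'a sit \<Rightarrow> (real \<Rightarrow> 'a sit \<Rightarrow> bool) \<Rightarrow> bool" where
  "DirPossContr M \<gamma> \<alpha> s\<alpha> s\<phi> \<sigma> \<phi> \<longleftrightarrow>
     (\<exists>i ts. Exec M s\<alpha> \<and> Poss M \<alpha> s\<alpha> \<and> timeStamp s\<alpha> = ts \<and> slt M s\<alpha> s\<phi> \<and> sle M s\<phi> \<sigma> \<and>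
            \<not> \<phi> (time M \<alpha>) s\<alpha> \<and> \<phi> (send M s\<phi> \<sigma>) s\<phi> \<and> CausesDir M \<alpha> ts (\<gamma> i) s\<phi>)"

definition DirActContr :: "'a htsc \<Rightarrow> ('i \<Rightarrow> 'a sit \<Rightarrow> bool) \<Rightarrow> 'a \<Rightarrow> 'a sit \<Rightarrow> 'a sit
     \<Rightarrow> (real \<Rightarrow> 'a sit \<Rightarrow> bool) \<Rightarrow> 'a sit \<Rightarrow> bool" where
  "DirActContr M \<gamma> \<alpha> s\<alpha> s\<phi> \<phi> \<sigma> \<longleftrightarrow>
     (\<exists>\<sigma>'. DirPossContr M \<gamma> \<alpha> s\<alpha> s\<phi> \<sigma>' \<phi> \<and> sle M \<sigma>' \<sigma>)"

definition PrimCause :: "'a htsc \<Rightarrow> ('i \<Rightarrow> 'a sit \<Rightarrow> bool) \<Rightarrow> 'a \<Rightarrow> nat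
     \<Rightarrow> (real \<Rightarrow> 'a sit \<Rightarrow> bool) \<Rightarrow> 'a sit \<Rightarrow> bool" where
  "PrimCause M \<gamma> \<alpha> ts \<phi> \<sigma> \<longleftrightarrow>
     (\<exists>s\<alpha> s\<phi>. AchvSit M s\<phi> \<phi> \<sigma> \<and> timeStamp s\<alpha> = ts \<and> DirActContr M \<gamma> \<alpha> s\<alpha> s\<phi> \<phi> \<sigma>)"

definition CF_one :: "'a sit \<Rightarrow> 'a sit \<Rightarrow> 'a \<Rightarrow> 'a \<Rightarrow> nat \<Rightarrow> bool" where
  "CF_one s' s a' a ts \<longleftrightarrow>
     (\<exists>ssh. timeStamp ssh = ts \<and> a \<noteq> a' \<and> subeq (Do a ssh) s \<and> subeq (Do a' ssh) s' \<and>
        (\<forall>as ss. psub (Do a ssh) (Do as ss) \<and> subeq (Do as ss) s \<longrightarrow>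
            (\<exists>sp. timeStamp sp = timeStamp ss \<and> subeq (Do as sp) s')) \<and>
        (\<forall>as ss. psub (Do a' ssh) (Do as ss) \<and> subeq (Do as ss) s' \<longrightarrow>
            (\<exists>sp. timeStamp sp = timeStamp ss \<and> subeq (Do as sp) s)))"

text \<open>PreempContr M \<gamma> \<phi> \<sigma> a ts \<sigma>' stands for PreempContr(a, ts, \<sigma>', \<phi>, \<sigma>) (least relation).\<close>
inductive PreempContr :: "'a htsc \<Rightarrow> ('i \<Rightarrow> 'a sit \<Rightarrow> bool) \<Rightarrow> (real \<Rightarrow> 'a sit \<Rightarrow> bool)
     \<Rightarrow> 'a sit \<Rightarrow> 'a \<Rightarrow> nat \<Rightarrow> 'a sit \<Rightarrow> bool"
  for M \<gamma> \<phi> \<sigma> where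
  base: "PrimCause M \<gamma> a ts \<phi> \<sigma> \<Longrightarrow> CF_one \<sigma>' \<sigma> (noOp M (time M a)) a ts
           \<Longrightarrow> PreempContr M \<gamma> \<phi> \<sigma> a ts \<sigma>'"
| step: "PreempContr M \<gamma> \<phi> \<sigma> a'' ts'' \<sigma>'' \<Longrightarrow> PrimCause M \<gamma> a' ts' \<phi> \<sigma>''
           \<Longrightarrow> CF_one \<sigma>' \<sigma>'' (noOp M (time M a')) a' ts'
           \<Longrightarrow> PreempContr M \<gamma> \<phi> \<sigma> a' ts' \<sigma>'"

text \<open>|s| : number of noOp actions in s.\<close>
fun noOpCount :: "'a htsc \<Rightarrow> 'a sit \<Rightarrow> nat" where
  "noOpCount M S0 = 0"
| "noOpCount M (Do a s) = (if \<exists>t. a = noOp M t then 1 + noOpCount M s else noOpCount M s)"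

definition DefusedSit :: "'a htsc \<Rightarrow> ('i \<Rightarrow> 'a sit \<Rightarrow> bool) \<Rightarrow> (real \<Rightarrow> 'a sit \<Rightarrow> bool)
     \<Rightarrow> 'a sit \<Rightarrow> 'a sit \<Rightarrow> bool" where
  "DefusedSit M \<gamma> \<phi> \<sigma> \<sigma>' \<longleftrightarrow>
     (\<exists>a' ts'. PreempContr M \<gamma> \<phi> \<sigma> a' ts' \<sigma>') \<and>
     (\<forall>\<sigma>'' a'' ts''. PreempContr M \<gamma> \<phi> \<sigma> a'' ts'' \<sigma>'' \<and> \<sigma>' \<noteq> \<sigma>''
        \<longrightarrow> noOpCount M \<sigma>'' < noOpCount M \<sigma>')"

end

theory Submission
  imports Defs
begin

text \<open>
  A primary cause of \<open>\<phi>\<close> in a situation is unique, because contexts are mutually exclusive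
  and the achievement situation is unique, and it is never a \<open>noOp\<close>, because a \<open>noOp\<close>
  does not change the contexts. Replacing it by a \<open>noOp\<close> is therefore a deterministic step
  on situations which keeps the length and adds one \<open>noOp\<close>. \<open>PreempContr\<close> relates \<open>\<sigma>\<close>
  exactly to the situations reachable from it by one or more such steps, and a defused
  situation is the reachable one with the most \<open>noOp\<close>s. Lying on a single deterministic
  chain, the reachable situations are told apart by their \<open>noOp\<close> count, which is bounded by
  the length of \<open>\<sigma>\<close>. So the defused situation exists as soon as \<open>\<sigma>\<close> has a primary cause,
  it is unique, and it is the end of the chain, i.e. it has no primary cause.
\<close>

section \<open>Deterministic relations with a strictly increasing measure\<close>

lemma tranclp_measure_less:
  fixes c :: "'a \<Rightarrow> 'b::order"
  assumes "\<And>u v. R u v \<Longrightarrow> c u < c v"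
  shows "R\<^sup>+\<^sup>+ x y \<Longrightarrow> c x < c y"
  by (induction rule: tranclp_induct) (auto intro: assms less_trans)

lemma right_unique_rtranclp_measure_inj:
  fixes c :: "'a \<Rightarrow> 'b::order"
  assumes "right_unique R" and incr: "\<And>u v. R u v \<Longrightarrow> c u < c v"
    and "R\<^sup>*\<^sup>* x y" "R\<^sup>*\<^sup>* x z" "c y = c z"
  shows "y = z"
proof -
  have "\<not> R\<^sup>+\<^sup>+ y z" "\<not> R\<^sup>+\<^sup>+ z y"
    using tranclp_measure_less[of R c, OF incr, of y z] tranclp_measure_less[of R c, OF incr, of z y]
      \<open>c y = c z\<close>
    by auto
  then show ?thesis
    using single_valued_confluent[to_pred, OF assms(1,3,4)] by (auto dest: rtranclpD)
qed

definition strict_max_successor :: "('a \<Rightarrow> 'a \<Rightarrow> bool) \<Rightarrow> ('a \<Rightarrow> 'b::order) \<Rightarrow> 'a \<Rightarrow> 'a \<Rightarrow> bool" where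
  "strict_max_successor R c x z \<longleftrightarrow> R\<^sup>+\<^sup>+ x z \<and> (\<forall>y. R\<^sup>+\<^sup>+ x y \<and> z \<noteq> y \<longrightarrow> c y < c z)"

lemma strict_max_successor_unique:
  "strict_max_successor R c x z \<Longrightarrow> strict_max_successor R c x z' \<Longrightarrow> z = z'"
  unfolding strict_max_successor_def by (blast dest: less_asym)

lemma ex_strict_max_successor:
  fixes c :: "'a \<Rightarrow> nat"
  assumes "right_unique R" and incr: "\<And>u v. R u v \<Longrightarrow> c u < c v"
    and "R x y0" and bounded: "\<And>y. R\<^sup>+\<^sup>+ x y \<Longrightarrow> c y < b"
  shows "\<exists>z. strict_max_successor R c x z"
proof -
  obtain z where z: "R\<^sup>+\<^sup>+ x z" "\<forall>y. R\<^sup>+\<^sup>+ x y \<longrightarrow> c y \<le> c z"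
    using ex_has_greatest_nat[of "R\<^sup>+\<^sup>+ x" y0 c b] \<open>R x y0\<close> bounded by blast
  have "c y < c z" if "R\<^sup>+\<^sup>+ x y" "z \<noteq> y" for y
  proof -
    have "c z \<noteq> c y"
      using right_unique_rtranclp_measure_inj[of R c, OF assms(1) incr
          tranclp_into_rtranclp[OF z(1)] tranclp_into_rtranclp[OF that(1)]] that(2)
      by blast
    with z(2) that(1) show ?thesis
      by (simp add: order_less_le)
  qed
  with z(1) show ?thesis
    unfolding strict_max_successor_def by blast
qed

lemma strict_max_successor_not_step:
  fixes c :: "'a \<Rightarrow> 'b::order"
  assumes incr: "\<And>u v. R u v \<Longrightarrow> c u < c v" and "strict_max_successor R c x z"
  shows "\<not> R z w"
proof
  assume "R z w"
  moreover have "R\<^sup>+\<^sup>+ x z" "\<forall>y. R\<^sup>+\<^sup>+ x y \<and> z \<noteq> y \<longrightarrow> c y < c z"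
    using assms(2) unfolding strict_max_successor_def by blast+
  ultimately have "R\<^sup>+\<^sup>+ x w" "c z < c w"
    using incr by auto
  with \<open>\<forall>y. R\<^sup>+\<^sup>+ x y \<and> z \<noteq> y \<longrightarrow> c y < c z\<close> show False
    by (auto dest: less_asym)
qed

section \<open>Situations as finite maps from time stamps to actions\<close>

primrec actionAt :: "'a sit \<Rightarrow> nat \<rightharpoonup> 'a" where
  "actionAt S0 = Map.empty"
| "actionAt (Do a s) = (actionAt s)(timeStamp s \<mapsto> a)"

lemma actionAt_eq_None_iff: "actionAt s k = None \<longleftrightarrow> timeStamp s \<le> k"
  by (induction s) auto

lemma dom_actionAt: "dom (actionAt s) = {..<timeStamp s}"
  by (simp add: dom_def lessThan_def actionAt_eq_None_iff not_le)

lemma timeStamp_eqI: "dom (actionAt s) = dom (actionAt s') \<Longrightarrow> timeStamp s = timeStamp s'"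
  by (simp add: dom_actionAt)

lemma inj_actionAt: "inj actionAt"
proof (rule injI)
  show "actionAt s1 = actionAt s2 \<Longrightarrow> s1 = s2" for s1 s2 :: "'a sit"
  proof (induction s1 arbitrary: s2)
    case S0
    then have "timeStamp s2 = 0"
      using timeStamp_eqI[of S0 s2] by (metis timeStamp.simps(1))
    then show ?case
      by (cases s2) auto
  next
    case (Do a s1)
    then have "timeStamp s2 = timeStamp s1 + 1"
      using timeStamp_eqI[of "Do a s1" s2] by (metis timeStamp.simps(2))
    then obtain b s2' where s2: "s2 = Do b s2'" and ts: "timeStamp s1 = timeStamp s2'"
      by (cases s2) auto
    have "actionAt s1 k = actionAt s2' k" for k
      using fun_cong[OF Do.prems, of k] s2 ts actionAt_eq_None_iff[of s1 k] actionAt_eq_None_iff[of s2' k]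
      by (cases "k = timeStamp s1") auto
    moreover have "a = b"
      using Do.prems s2 ts fun_cong[OF Do.prems, of "timeStamp s1"] by simp
    ultimately show ?case
      using Do.IH s2 by blast
  qed
qed

lemma psub_timeStamp_less: "psub x y \<Longrightarrow> timeStamp x < timeStamp y"
  by (induction y) auto

lemma subeq_timeStamp_le: "subeq x y \<Longrightarrow> timeStamp x \<le> timeStamp y"
  unfolding subeq_def using psub_timeStamp_less by fastforce

lemma psub_trans: "psub x y \<Longrightarrow> psub y z \<Longrightarrow> psub x z"
  by (induction z) auto

lemma subeq_trans: "subeq x y \<Longrightarrow> subeq y z \<Longrightarrow> subeq x z"
  unfolding subeq_def using psub_trans by blast

lemma subeq_DoD: "subeq (Do a p) s \<Longrightarrow> subeq p s"
  using subeq_trans[of p "Do a p" s] by (simp add: subeq_def)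

lemma subeq_comparable: "subeq x s \<Longrightarrow> subeq y s \<Longrightarrow> subeq x y \<or> psub y x"
  by (induction s) (auto simp: subeq_def)

lemma actionAt_prefix: "subeq p s \<Longrightarrow> actionAt p = actionAt s |` {..<timeStamp p}"
proof (induction s)
  case S0
  then show ?case by (simp add: subeq_def)
next
  case (Do a s)
  then show ?case
    using subeq_timeStamp_le[of p s]
    by (auto simp: subeq_def restrict_map_def fun_eq_iff actionAt_eq_None_iff)
qed

lemma subeq_eq_if_timeStamp_eq: "subeq x s \<Longrightarrow> subeq y s \<Longrightarrow> timeStamp x = timeStamp y \<Longrightarrow> x = y"
  using actionAt_prefix inj_actionAt by (metis injD)

lemma subeq_iff_timeStamp_le:
  "subeq x s \<Longrightarrow> subeq y s \<Longrightarrow> subeq x y \<longleftrightarrow> timeStamp x \<le> timeStamp y"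
  using subeq_comparable psub_timeStamp_less subeq_timeStamp_le subeq_eq_if_timeStamp_eq
  by (metis antisym leD)

lemma psub_iff_timeStamp_less:
  "subeq x s \<Longrightarrow> subeq y s \<Longrightarrow> psub x y \<longleftrightarrow> timeStamp x < timeStamp y"
  using subeq_comparable psub_timeStamp_less subeq_timeStamp_le
  by (metis less_le_not_le subeq_def)

lemma actionAt_eq_Some_iff: "actionAt s k = Some c \<longleftrightarrow> (\<exists>p. timeStamp p = k \<and> subeq (Do c p) s)"
proof
  show "actionAt s k = Some c \<Longrightarrow> \<exists>p. timeStamp p = k \<and> subeq (Do c p) s"
    by (induction s) (auto simp: subeq_def split: if_splits)
  show "\<exists>p. timeStamp p = k \<and> subeq (Do c p) s \<Longrightarrow> actionAt s k = Some c"
    using actionAt_prefix by (fastforce simp: restrict_map_def dest: fun_cong[where x = k])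
qed

lemma later_actions_kept_iff:
  assumes "subeq (Do a p) s"
  shows "(\<forall>c q. psub (Do a p) (Do c q) \<and> subeq (Do c q) s
            \<longrightarrow> (\<exists>q'. timeStamp q' = timeStamp q \<and> subeq (Do c q') s'))
     \<longleftrightarrow> (\<forall>k>timeStamp p. \<forall>c. actionAt s k = Some c \<longrightarrow> actionAt s' k = Some c)"
proof -
  have "psub (Do a p) (Do c q) \<longleftrightarrow> timeStamp p < timeStamp q" if "subeq (Do c q) s" for c q
    using psub_iff_timeStamp_less[OF assms that] by simp
  then show ?thesis
    unfolding actionAt_eq_Some_iff by blast
qed

lemma CF_oneD:
  assumes "CF_one s' s a' a ts"
  shows "a \<noteq> a' \<and> actionAt s ts = Some a \<and> actionAt s' = (actionAt s)(ts \<mapsto> a')"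
proof -
  obtain p where p: "timeStamp p = ts" "a \<noteq> a'" "subeq (Do a p) s" "subeq (Do a' p) s'"
    and kept: "\<forall>c q. psub (Do a p) (Do c q) \<and> subeq (Do c q) s
                  \<longrightarrow> (\<exists>q'. timeStamp q' = timeStamp q \<and> subeq (Do c q') s')"
      "\<forall>c q. psub (Do a' p) (Do c q) \<and> subeq (Do c q) s'
                  \<longrightarrow> (\<exists>q'. timeStamp q' = timeStamp q \<and> subeq (Do c q') s)"
    using assms unfolding CF_one_def by blast
  have later: "\<forall>k>ts. \<forall>c. actionAt s k = Some c \<longrightarrow> actionAt s' k = Some c"
      "\<forall>k>ts. \<forall>c. actionAt s' k = Some c \<longrightarrow> actionAt s k = Some c"
    using later_actions_kept_iff[OF p(3), THEN iffD1, OF kept(1)]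
      later_actions_kept_iff[OF p(4), THEN iffD1, OF kept(2)]
    by (simp_all only: p(1))
  have earlier: "actionAt s |` {..<ts} = actionAt s' |` {..<ts}"
    using actionAt_prefix[OF subeq_DoD[OF p(3)]] actionAt_prefix[OF subeq_DoD[OF p(4)]] p(1)
    by simp
  have at_ts: "actionAt s ts = Some a" "actionAt s' ts = Some a'"
    using p(1,3,4) actionAt_eq_Some_iff[of s ts a] actionAt_eq_Some_iff[of s' ts a'] by auto
  have "actionAt s k = actionAt s' k" if "k \<noteq> ts" for k
  proof (cases "k < ts")
    case True
    with fun_cong[OF earlier, of k] show ?thesis
      by simp
  next
    case False
    with that have "ts < k"
      by simp
    with later have "actionAt s k = Some c \<longleftrightarrow> actionAt s' k = Some c" for c
      by blast
    then show ?thesis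
      by (metis option.exhaust)
  qed
  then have "actionAt s' = (actionAt s)(ts \<mapsto> a')"
    using at_ts(2) by (metis fun_upd_other fun_upd_same ext)
  with p(2) at_ts(1) show ?thesis
    by blast
qed

lemma CF_oneI:
  assumes "a \<noteq> a'" "actionAt s ts = Some a" "actionAt s' = (actionAt s)(ts \<mapsto> a')"
  shows "CF_one s' s a' a ts"
proof -
  obtain p p' where p: "timeStamp p = ts" "subeq (Do a p) s"
    and p': "timeStamp p' = ts" "subeq (Do a' p') s'"
    using assms(2,3) actionAt_eq_Some_iff[of s ts a] actionAt_eq_Some_iff[of s' ts a'] by auto
  have "actionAt s |` {..<ts} = actionAt s' |` {..<ts}"
    using assms(3) by (auto simp: restrict_map_def fun_eq_iff)
  then have "actionAt p' = actionAt p"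
    using actionAt_prefix[OF subeq_DoD[OF p(2)]] actionAt_prefix[OF subeq_DoD[OF p'(2)]] p(1) p'(1)
    by simp
  from inj_actionAt this have "p' = p"
    by (rule injD)
  then have p'_Do: "subeq (Do a' p) s'"
    using p'(2) by simp
  have later: "\<forall>k>timeStamp p. \<forall>c. actionAt s k = Some c \<longrightarrow> actionAt s' k = Some c"
    "\<forall>k>timeStamp p. \<forall>c. actionAt s' k = Some c \<longrightarrow> actionAt s k = Some c"
    using assms(3) p(1) by auto
  show ?thesis
    unfolding CF_one_def
    using assms(1) p p'_Do later_actions_kept_iff[OF p(2), THEN iffD2, OF later(1)]
      later_actions_kept_iff[OF p'_Do, THEN iffD2, OF later(2)]
    by blast
qed

lemma CF_one_iff:
  "CF_one s' s a' a ts \<longleftrightarrow> a \<noteq> a' \<and> actionAt s ts = Some a \<and> actionAt s' = (actionAt s)(ts \<mapsto> a')"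
  using CF_oneD[of s' s a' a ts] CF_oneI[of a a' s ts s'] by blast

lemma CF_one_unique: "CF_one s1 s a' a ts \<Longrightarrow> CF_one s2 s a' a ts \<Longrightarrow> s1 = s2"
  by (rule injD[OF inj_actionAt]) (simp add: CF_one_iff)

lemma CF_one_timeStamp: "CF_one s' s a' a ts \<Longrightarrow> timeStamp s' = timeStamp s"
  by (intro timeStamp_eqI) (auto simp: CF_one_iff)

fun replaceAction :: "nat \<Rightarrow> 'a \<Rightarrow> 'a sit \<Rightarrow> 'a sit" where
  "replaceAction k b S0 = S0"
| "replaceAction k b (Do c s) = (if timeStamp s = k then Do b s else Do c (replaceAction k b s))"

lemma timeStamp_replaceAction: "timeStamp (replaceAction k b s) = timeStamp s"
  by (induction s) auto

lemma actionAt_replaceAction: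
  "k < timeStamp s \<Longrightarrow> actionAt (replaceAction k b s) = (actionAt s)(k \<mapsto> b)"
  by (induction s) (auto simp: timeStamp_replaceAction fun_upd_twist)

lemma ex_CF_one: "actionAt s ts = Some a \<Longrightarrow> a \<noteq> a' \<Longrightarrow> \<exists>s'. CF_one s' s a' a ts"
  using actionAt_replaceAction[of ts s a'] actionAt_eq_None_iff[of s ts]
  by (auto simp: CF_one_iff)

definition noOpSteps :: "'a htsc \<Rightarrow> 'a sit \<Rightarrow> nat set" where
  "noOpSteps M s = {k. \<exists>t. actionAt s k = Some (noOp M t)}"

lemma noOpSteps_subset: "noOpSteps M s \<subseteq> {..<timeStamp s}"
  unfolding noOpSteps_def dom_actionAt[symmetric] by auto

lemma noOpCount_eq_card: "noOpCount M s = card (noOpSteps M s)"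
proof (induction s)
  case S0
  then show ?case by (simp add: noOpSteps_def)
next
  case (Do a s)
  have "finite (noOpSteps M s)" "timeStamp s \<notin> noOpSteps M s"
    using noOpSteps_subset finite_subset by blast+
  moreover have "noOpSteps M (Do a s) =
      (if \<exists>t. a = noOp M t then insert (timeStamp s) (noOpSteps M s) else noOpSteps M s)"
    using \<open>timeStamp s \<notin> noOpSteps M s\<close> by (auto simp: noOpSteps_def)
  ultimately show ?case
    using Do.IH by simp
qed

lemma noOpCount_le_timeStamp: "noOpCount M s \<le> timeStamp s"
  using card_mono[OF _ noOpSteps_subset] by (simp add: noOpCount_eq_card)

lemma CF_one_noOpCount:
  assumes "CF_one s' s (noOp M t) a ts" "\<And>t. a \<noteq> noOp M t"
  shows "noOpCount M s' = noOpCount M s + 1"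
proof -
  have "noOpSteps M s' = insert ts (noOpSteps M s)" "ts \<notin> noOpSteps M s"
    using assms by (auto simp: CF_one_iff noOpSteps_def)
  moreover have "finite (noOpSteps M s)"
    using noOpSteps_subset finite_subset by blast
  ultimately show ?thesis
    by (simp add: noOpCount_eq_card)
qed

lemma Exec_subeq: "Exec M s \<Longrightarrow> subeq p s \<Longrightarrow> Exec M p"
  unfolding Exec_def using subeq_trans by blast

lemma sle_imp_subeq: "sle M x y \<Longrightarrow> subeq x y"
  unfolding sle_def slt_def subeq_def by auto

lemma sle_if_subeq: "subeq x y \<Longrightarrow> Exec M y \<Longrightarrow> sle M x y"
  unfolding sle_def slt_def subeq_def by auto

lemma PrimCauseE:
  assumes "PrimCause M \<gamma> a ts \<phi> \<sigma>"
  obtains s\<phi> sa i where "AchvSit M s\<phi> \<phi> \<sigma>" "Exec M s\<phi>" "subeq s\<phi> \<sigma>" "timeStamp sa = ts"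
    "subeq (Do a sa) s\<phi>" "\<not> \<gamma> i sa"
    "\<forall>sb. subeq sb s\<phi> \<and> timeStamp sa < timeStamp sb \<longrightarrow> \<gamma> i sb"
proof -
  obtain s\<phi> \<sigma>' i sa where achv: "AchvSit M s\<phi> \<phi> \<sigma>" and exec: "Exec M s\<phi>"
    and "sle M s\<phi> \<sigma>'" "sle M \<sigma>' \<sigma>" and ts: "timeStamp sa = ts" and "sle M (Do a sa) s\<phi>"
    and before: "\<not> \<gamma> i sa" and window: "\<forall>s'. sle M (Do a sa) s' \<and> sle M s' s\<phi> \<longrightarrow> \<gamma> i s'"
    using assms
    unfolding PrimCause_def DirActContr_def DirPossContr_def CausesDir_def slt_def by blast
  have "subeq s\<phi> \<sigma>"
    using sle_imp_subeq subeq_trans \<open>sle M s\<phi> \<sigma>'\<close> \<open>sle M \<sigma>' \<sigma>\<close> by blast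
  have "subeq (Do a sa) s\<phi>"
    using \<open>sle M (Do a sa) s\<phi>\<close> by (rule sle_imp_subeq)
  have "\<forall>sb. subeq sb s\<phi> \<and> timeStamp sa < timeStamp sb \<longrightarrow> \<gamma> i sb"
  proof (intro allI impI, elim conjE)
    fix sb
    assume "subeq sb s\<phi>" "timeStamp sa < timeStamp sb"
    then have "subeq (Do a sa) sb"
      using subeq_iff_timeStamp_le[OF \<open>subeq (Do a sa) s\<phi>\<close>] by simp
    then show "\<gamma> i sb"
      using window sle_if_subeq exec Exec_subeq \<open>subeq sb s\<phi>\<close> by blast
  qed
  then show ?thesis
    using that[OF achv exec \<open>subeq s\<phi> \<sigma>\<close> ts \<open>subeq (Do a sa) s\<phi>\<close> before] by blast
qed

lemma PrimCause_not_noOp: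
  assumes noOp_no_effect: "\<And>t s. st (Do (noOp M t) s) = st s"
    and ctx_uniform: "\<And>i s s'. st s = st s' \<Longrightarrow> \<gamma> i s = \<gamma> i s'"
    and "PrimCause M \<gamma> a ts \<phi> \<sigma>"
  shows "a \<noteq> noOp M t"
proof
  assume "a = noOp M t"
  obtain s\<phi> sa i where "AchvSit M s\<phi> \<phi> \<sigma>" "Exec M s\<phi>" "subeq s\<phi> \<sigma>" "timeStamp sa = ts"
    "subeq (Do a sa) s\<phi>" "\<not> \<gamma> i sa"
    "\<forall>sb. subeq sb s\<phi> \<and> timeStamp sa < timeStamp sb \<longrightarrow> \<gamma> i sb"
    by (rule PrimCauseE[OF assms(3)])
  then have "\<gamma> i (Do a sa)" "\<not> \<gamma> i sa"
    by simp_all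
  with \<open>a = noOp M t\<close> show False
    using ctx_uniform noOp_no_effect by blast
qed

lemma actionAt_PrimCause: "PrimCause M \<gamma> a ts \<phi> \<sigma> \<Longrightarrow> actionAt \<sigma> ts = Some a"
  by (elim PrimCauseE) (auto simp: actionAt_eq_Some_iff dest: subeq_trans)

lemma AchvSit_unique:
  assumes "AchvSit M x \<phi> \<sigma>" "AchvSit M y \<phi> \<sigma>" "Exec M x" "Exec M y" "subeq x \<sigma>" "subeq y \<sigma>"
  shows "x = y"
proof -
  have "\<not> psub x y" "\<not> psub y x"
    using assms unfolding AchvSit_def slt_def by blast+
  then show ?thesis
    using subeq_comparable[OF assms(5,6)] by (simp add: subeq_def)
qed

lemma last_violating_prefix_unique:
  assumes "subeq p1 s" "subeq p2 s" "\<not> P p1" "\<not> P p2"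
    and "\<forall>q. subeq q s \<and> timeStamp p1 < timeStamp q \<longrightarrow> P q"
    and "\<forall>q. subeq q s \<and> timeStamp p2 < timeStamp q \<longrightarrow> P q"
  shows "p1 = p2"
proof -
  have "\<not> timeStamp p1 < timeStamp p2" "\<not> timeStamp p2 < timeStamp p1"
    using assms by blast+
  then show ?thesis
    using subeq_eq_if_timeStamp_eq[OF assms(1,2)] by simp
qed

lemma PrimCause_unique:
  assumes ctx_excl: "\<And>i j s. \<gamma> i s \<Longrightarrow> \<gamma> j s \<Longrightarrow> i = j"
    and "PrimCause M \<gamma> a1 ts1 \<phi> \<sigma>" "PrimCause M \<gamma> a2 ts2 \<phi> \<sigma>"
  shows "a1 = a2 \<and> ts1 = ts2"
proof -
  obtain s\<phi>1 sa1 i1 where 1: "AchvSit M s\<phi>1 \<phi> \<sigma>" "Exec M s\<phi>1" "subeq s\<phi>1 \<sigma>"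
    "timeStamp sa1 = ts1" "subeq (Do a1 sa1) s\<phi>1" "\<not> \<gamma> i1 sa1"
    "\<forall>sb. subeq sb s\<phi>1 \<and> timeStamp sa1 < timeStamp sb \<longrightarrow> \<gamma> i1 sb"
    by (rule PrimCauseE[OF assms(2)])
  obtain s\<phi>2 sa2 i2 where 2: "AchvSit M s\<phi>2 \<phi> \<sigma>" "Exec M s\<phi>2" "subeq s\<phi>2 \<sigma>"
    "timeStamp sa2 = ts2" "subeq (Do a2 sa2) s\<phi>2" "\<not> \<gamma> i2 sa2"
    "\<forall>sb. subeq sb s\<phi>2 \<and> timeStamp sa2 < timeStamp sb \<longrightarrow> \<gamma> i2 sb"
    by (rule PrimCauseE[OF assms(3)])
  have "s\<phi>2 = s\<phi>1"
    by (rule AchvSit_unique[OF 2(1) 1(1) 2(2) 1(2) 2(3) 1(3)])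
  have "timeStamp sa1 < timeStamp s\<phi>1" "timeStamp sa2 < timeStamp s\<phi>1"
    using subeq_timeStamp_le[OF 1(5)] subeq_timeStamp_le[OF 2(5)] \<open>s\<phi>2 = s\<phi>1\<close> by simp_all
  then have "\<gamma> i1 s\<phi>1" "\<gamma> i2 s\<phi>1"
    using 1(7) 2(7) \<open>s\<phi>2 = s\<phi>1\<close> by (simp_all add: subeq_def)
  then have "i2 = i1"
    using ctx_excl by blast
  have "sa1 = sa2"
    using 1(6,7) 2(6,7) subeq_DoD[OF 1(5)] subeq_DoD[OF 2(5)] \<open>s\<phi>2 = s\<phi>1\<close> \<open>i2 = i1\<close>
    by (intro last_violating_prefix_unique[where P = "\<gamma> i1" and s = s\<phi>1]) simp_all
  then have "ts1 = ts2"
    using 1(4) 2(4) by simp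
  moreover have "a1 = a2"
    using actionAt_PrimCause[OF assms(2)] actionAt_PrimCause[OF assms(3)] \<open>ts1 = ts2\<close> by simp
  ultimately show ?thesis
    by simp
qed

definition preempStep :: "'a htsc \<Rightarrow> ('i \<Rightarrow> 'a sit \<Rightarrow> bool) \<Rightarrow> (real \<Rightarrow> 'a sit \<Rightarrow> bool)
     \<Rightarrow> 'a sit \<Rightarrow> 'a sit \<Rightarrow> bool" where
  "preempStep M \<gamma> \<phi> s s' \<longleftrightarrow>
     (\<exists>a ts. PrimCause M \<gamma> a ts \<phi> s \<and> CF_one s' s (noOp M (time M a)) a ts)"

lemma ex_PreempContr_iff_tranclp:
  "(\<exists>a ts. PreempContr M \<gamma> \<phi> \<sigma> a ts \<sigma>') \<longleftrightarrow> (preempStep M \<gamma> \<phi>)\<^sup>+\<^sup>+ \<sigma> \<sigma>'"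
proof
  assume "\<exists>a ts. PreempContr M \<gamma> \<phi> \<sigma> a ts \<sigma>'"
  then obtain a ts where "PreempContr M \<gamma> \<phi> \<sigma> a ts \<sigma>'"
    by blast
  then show "(preempStep M \<gamma> \<phi>)\<^sup>+\<^sup>+ \<sigma> \<sigma>'"
  proof (induction rule: PreempContr.induct)
    case (base a ts \<sigma>')
    then show ?case
      unfolding preempStep_def by blast
  next
    case (step a'' ts'' \<sigma>'' a' ts' \<sigma>')
    then have "preempStep M \<gamma> \<phi> \<sigma>'' \<sigma>'"
      unfolding preempStep_def by blast
    with step.IH show ?case
      by (rule tranclp.trancl_into_trancl)
  qed
next
  assume "(preempStep M \<gamma> \<phi>)\<^sup>+\<^sup>+ \<sigma> \<sigma>'"
  then show "\<exists>a ts. PreempContr M \<gamma> \<phi> \<sigma> a ts \<sigma>'"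
  proof (induction rule: tranclp_induct)
    case (base y)
    then show ?case
      unfolding preempStep_def by (blast intro: PreempContr.base)
  next
    case (step y z)
    then show ?case
      unfolding preempStep_def by (blast intro: PreempContr.step)
  qed
qed

lemma PreempContr_imp_tranclp:
  "PreempContr M \<gamma> \<phi> \<sigma> a ts \<sigma>' \<Longrightarrow> (preempStep M \<gamma> \<phi>)\<^sup>+\<^sup>+ \<sigma> \<sigma>'"
  by (rule ex_PreempContr_iff_tranclp[THEN iffD1]) blast

lemma DefusedSit_iff:
  "DefusedSit M \<gamma> \<phi> \<sigma> \<sigma>' \<longleftrightarrow> strict_max_successor (preempStep M \<gamma> \<phi>) (noOpCount M) \<sigma> \<sigma>'"
  unfolding DefusedSit_def strict_max_successor_def ex_PreempContr_iff_tranclp[symmetric] by blast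

lemma right_unique_preempStep:
  assumes "\<And>i j s. \<gamma> i s \<Longrightarrow> \<gamma> j s \<Longrightarrow> i = j"
  shows "right_unique (preempStep M \<gamma> \<phi>)"
proof (rule right_uniqueI)
  fix s s1 s2
  assume "preempStep M \<gamma> \<phi> s s1" "preempStep M \<gamma> \<phi> s s2"
  then obtain a1 ts1 a2 ts2 where "PrimCause M \<gamma> a1 ts1 \<phi> s" and cf1: "CF_one s1 s (noOp M (time M a1)) a1 ts1"
    and "PrimCause M \<gamma> a2 ts2 \<phi> s" and cf2: "CF_one s2 s (noOp M (time M a2)) a2 ts2"
    unfolding preempStep_def by blast
  then have "a1 = a2 \<and> ts1 = ts2"
    using assms by (intro PrimCause_unique)
  with cf2 have "CF_one s2 s (noOp M (time M a1)) a1 ts1"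
    by simp
  with cf1 show "s1 = s2"
    by (rule CF_one_unique)
qed

lemma preempStep_noOpCount_less:
  assumes "\<And>t. time M (noOp M t) = t" and "preempStep M \<gamma> \<phi> s s'"
  shows "noOpCount M s < noOpCount M s'"
proof -
  obtain a ts where cf: "CF_one s' s (noOp M (time M a)) a ts"
    using assms(2) unfolding preempStep_def by blast
  moreover have "a \<noteq> noOp M t" for t
    using cf assms(1) by (auto simp: CF_one_def)
  ultimately show ?thesis
    using CF_one_noOpCount by fastforce
qed

lemma tranclp_preempStep_timeStamp:
  "(preempStep M \<gamma> \<phi>)\<^sup>+\<^sup>+ s s' \<Longrightarrow> timeStamp s' = timeStamp s"
  by (induction rule: tranclp_induct) (auto simp: preempStep_def dest: CF_one_timeStamp)

lemma ex_preempStep: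
  assumes "\<And>t s. st (Do (noOp M t) s) = st s"
    and "\<And>i s s'. st s = st s' \<Longrightarrow> \<gamma> i s = \<gamma> i s'"
    and "PrimCause M \<gamma> a ts \<phi> s"
  shows "\<exists>s'. preempStep M \<gamma> \<phi> s s'"
  using ex_CF_one[OF actionAt_PrimCause[OF assms(3)] PrimCause_not_noOp[OF assms]] assms(3)
  unfolding preempStep_def by blast

lemma ex_DefusedSit:
  assumes noOp_time: "\<And>t. time M (noOp M t) = t"
    and noOp_no_effect: "\<And>t s. st (Do (noOp M t) s) = st s"
    and ctx_uniform: "\<And>i s s'. st s = st s' \<Longrightarrow> \<gamma> i s = \<gamma> i s'"
    and ctx_excl: "\<And>i j s. \<gamma> i s \<Longrightarrow> \<gamma> j s \<Longrightarrow> i = j"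
    and "PrimCause M \<gamma> a ts \<phi> \<sigma>"
  shows "\<exists>\<sigma>'. DefusedSit M \<gamma> \<phi> \<sigma> \<sigma>'"
proof -
  have "\<exists>\<sigma>1. preempStep M \<gamma> \<phi> \<sigma> \<sigma>1"
    using noOp_no_effect ctx_uniform assms(5) by (rule ex_preempStep)
  then obtain \<sigma>1 where "preempStep M \<gamma> \<phi> \<sigma> \<sigma>1"
    by blast
  have det: "right_unique (preempStep M \<gamma> \<phi>)"
    using ctx_excl by (rule right_unique_preempStep)
  have incr: "\<And>u v. preempStep M \<gamma> \<phi> u v \<Longrightarrow> noOpCount M u < noOpCount M v"
    using noOp_time by (rule preempStep_noOpCount_less)
  have bounded: "noOpCount M y < timeStamp \<sigma> + 1" if "(preempStep M \<gamma> \<phi>)\<^sup>+\<^sup>+ \<sigma> y" for y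
    using tranclp_preempStep_timeStamp[OF that] noOpCount_le_timeStamp[of M y] by simp
  show ?thesis
    unfolding DefusedSit_iff
    using det incr \<open>preempStep M \<gamma> \<phi> \<sigma> \<sigma>1\<close> bounded by (rule ex_strict_max_successor)
qed

lemma PreempContr_eq_if_noOpCount_eq:
  assumes "\<And>t. time M (noOp M t) = t" and "\<And>i j s. \<gamma> i s \<Longrightarrow> \<gamma> j s \<Longrightarrow> i = j"
    and "PreempContr M \<gamma> \<phi> \<sigma> a1 ts1 \<sigma>1" "PreempContr M \<gamma> \<phi> \<sigma> a2 ts2 \<sigma>2"
    and "noOpCount M \<sigma>1 = noOpCount M \<sigma>2"
  shows "\<sigma>1 = \<sigma>2"
proof -
  have "right_unique (preempStep M \<gamma> \<phi>)"
    using assms(2) by (rule right_unique_preempStep)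
  moreover have "\<And>u v. preempStep M \<gamma> \<phi> u v \<Longrightarrow> noOpCount M u < noOpCount M v"
    using assms(1) by (rule preempStep_noOpCount_less)
  moreover have "(preempStep M \<gamma> \<phi>)\<^sup>*\<^sup>* \<sigma> \<sigma>1" "(preempStep M \<gamma> \<phi>)\<^sup>*\<^sup>* \<sigma> \<sigma>2"
    using assms(3,4) by (auto dest: PreempContr_imp_tranclp)
  ultimately show ?thesis
    using assms(5) by (rule right_unique_rtranclp_measure_inj)
qed

lemma DefusedSit_unique: "DefusedSit M \<gamma> \<phi> \<sigma> \<sigma>' \<Longrightarrow> DefusedSit M \<gamma> \<phi> \<sigma> \<sigma>'' \<Longrightarrow> \<sigma>' = \<sigma>''"
  unfolding DefusedSit_iff by (rule strict_max_successor_unique)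

lemma DefusedSit_not_PrimCause:
  assumes "\<And>t. time M (noOp M t) = t"
    and "\<And>t s. st (Do (noOp M t) s) = st s"
    and "\<And>i s s'. st s = st s' \<Longrightarrow> \<gamma> i s = \<gamma> i s'"
    and "DefusedSit M \<gamma> \<phi> \<sigma> \<sigma>'"
  shows "\<not> PrimCause M \<gamma> b tsb \<phi> \<sigma>'"
proof
  assume "PrimCause M \<gamma> b tsb \<phi> \<sigma>'"
  with assms(2,3) have "\<exists>w. preempStep M \<gamma> \<phi> \<sigma>' w"
    by (rule ex_preempStep)
  moreover have "\<And>u v. preempStep M \<gamma> \<phi> u v \<Longrightarrow> noOpCount M u < noOpCount M v"
    using assms(1) by (rule preempStep_noOpCount_less)
  then have "\<not> preempStep M \<gamma> \<phi> \<sigma>' w" for w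
    using assms(4) unfolding DefusedSit_iff by (rule strict_max_successor_not_step)
  ultimately show False
    by blast
qed

theorem lemma7p7:
  fixes M :: "'a htsc"
    and st :: "'a sit \<Rightarrow> 'q"
    and \<gamma> :: "'i::finite \<Rightarrow> 'a sit \<Rightarrow> bool"
    and \<delta> :: "'i \<Rightarrow> 'v \<Rightarrow> real \<Rightarrow> 'a sit \<Rightarrow> bool"
    and f :: "real \<Rightarrow> 'a sit \<Rightarrow> 'v"
    and \<Phi> :: "'v \<Rightarrow> bool"
    and \<phi> :: "real \<Rightarrow> 'a sit \<Rightarrow> bool"
    and \<sigma> :: "'a sit"
  assumes noOp_time: "\<And>t. time M (noOp M t) = t"
    and noOp_poss: "\<And>t s. Poss M (noOp M t) s"
    and noOp_inj: "\<And>t t'. noOp M t = noOp M t' \<Longrightarrow> t = t'"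
    and noOp_no_effect: "\<And>t s. st (Do (noOp M t) s) = st s"
    and ctx_uniform: "\<And>i s s'. st s = st s' \<Longrightarrow> \<gamma> i s = \<gamma> i s'"
    and ctx_excl: "\<And>i j s. \<gamma> i s \<Longrightarrow> \<gamma> j s \<Longrightarrow> i = j"
    and SEA: "\<And>t s y. (f t s = y) \<longleftrightarrow>
               ((\<exists>i. \<gamma> i s \<and> \<delta> i y t s) \<or> (y = f (start M s) s \<and> \<not> (\<exists>i. \<gamma> i s)))"
    and effect: "\<And>t s. \<phi> t s = \<Phi> (f t s)"
  shows "((\<exists>a ts. PrimCause M \<gamma> a ts \<phi> \<sigma>) \<longrightarrow> (\<exists>\<sigma>'. DefusedSit M \<gamma> \<phi> \<sigma> \<sigma>'))
       \<and> (\<forall>a1 ts1 \<sigma>1 a2 ts2 \<sigma>2.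
            PreempContr M \<gamma> \<phi> \<sigma> a1 ts1 \<sigma>1 \<and> PreempContr M \<gamma> \<phi> \<sigma> a2 ts2 \<sigma>2
            \<and> noOpCount M \<sigma>1 = noOpCount M \<sigma>2 \<longrightarrow> \<sigma>1 = \<sigma>2)
       \<and> (\<forall>\<sigma>' \<sigma>''. DefusedSit M \<gamma> \<phi> \<sigma> \<sigma>' \<and> DefusedSit M \<gamma> \<phi> \<sigma> \<sigma>'' \<longrightarrow> \<sigma>' = \<sigma>'')
       \<and> (\<forall>\<sigma>'. DefusedSit M \<gamma> \<phi> \<sigma> \<sigma>' \<longrightarrow> \<not> (\<exists>b tsb. PrimCause M \<gamma> b tsb \<phi> \<sigma>'))"
proof -
  have "\<exists>\<sigma>'. DefusedSit M \<gamma> \<phi> \<sigma> \<sigma>'" if "PrimCause M \<gamma> a ts \<phi> \<sigma>" for a ts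
    using noOp_time noOp_no_effect ctx_uniform ctx_excl that by (rule ex_DefusedSit)
  moreover have "\<sigma>1 = \<sigma>2"
    if "PreempContr M \<gamma> \<phi> \<sigma> a1 ts1 \<sigma>1" "PreempContr M \<gamma> \<phi> \<sigma> a2 ts2 \<sigma>2"
      "noOpCount M \<sigma>1 = noOpCount M \<sigma>2"
    for a1 ts1 \<sigma>1 a2 ts2 \<sigma>2
    using noOp_time ctx_excl that by (rule PreempContr_eq_if_noOpCount_eq)
  moreover have "\<not> PrimCause M \<gamma> b tsb \<phi> \<sigma>'" if "DefusedSit M \<gamma> \<phi> \<sigma> \<sigma>'" for \<sigma>' b tsb
    using noOp_time noOp_no_effect ctx_uniform that by (rule DefusedSit_not_PrimCause)
  ultimately show ?thesis
    using DefusedSit_unique by blast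
qed

end
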